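(* Let $\Omega\subset\mathbb R^d$ be a connected bounded open set and $p\in(1,+\infty)$. Suppose there exist a positive bounded Radon measure $\mu$ on $\Omega\times\Omega$ and a constant $C\in\mathbb R$ such that for all open sets $A,B\subset\Omega$ with $A\cap B=\emptyset$, $$\Phi_p(|A|)+\Phi_p(|B|)-\Phi_p(|A|+|B|)=C\big(\mu(A\times B)+\mu(B\times A)\big).$$ Then $p=2$.
   Context: For $s\in[0,|\Omega|]$, $$\Phi_p(s)=\frac{s(|\Omega|-s)}{\big((|\Omega|-s)^{1/(p-1)}+s^{1/(p-1)}\big)^{p-1}},$$ where $|\cdot|$ is Lebesgue measure. *)

theory Defs
  imports "HOL-Analysis.Analysis"
begin

text \<open>The function Phi_p on [0, |Omega|]; the parameter m stands for |Omega|.\<close>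
definition Phi :: "real \<Rightarrow> real \<Rightarrow> real \<Rightarrow> real" where
  "Phi p m s = s * (m - s) /
     ((m - s) powr (1 / (p - 1)) + s powr (1 / (p - 1))) powr (p - 1)"

end

theory Submission
  imports Defs "HOL-Probability.Distribution_Functions"
begin

text \<open>Cut \<open>\<Omega>\<close> by parallel hyperplanes into open slabs \<open>A\<close>, \<open>B\<close>, \<open>D\<close> of measure
  \<open>h = |\<Omega>|/4\<close> each. The right-hand side of the hypothesis is additive in each of the two sets,
  so the defect \<open>\<Phi>(a) + \<Phi>(b) - \<Phi>(a + b)\<close> of \<open>(A \<union> B, D)\<close> is the sum of those of \<open>(A, D)\<close>
  and \<open>(B, D)\<close>. Since \<open>\<Phi>\<^sub>p\<close> is symmetric about \<open>|\<Omega>|/2\<close> and 1-homogeneous, this becomes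
  \<open>3 \<Phi>\<^sub>p(4, 2) = 4 \<Phi>\<^sub>p(4, 1)\<close>, i.e. \<open>1 + 3\<^sup>t = 2 \<cdot> 2\<^sup>t\<close> with \<open>t = 1/(p - 1)\<close>,
  whose only positive solution is \<open>t = 1\<close>.\<close>

lemma no_three_equal_values_if_strict_mono_deriv:
  fixes f f' :: "real \<Rightarrow> real"
  assumes deriv: "\<And>x. (f has_real_derivative f' x) (at x)" and "strict_mono f'"
    and "a < b" "b < c" "f a = f b" "f b = f c"
  shows False
proof -
  have critical_point: "\<exists>z. x < z \<and> z < y \<and> f' z = 0" if xy: "x < y" "f x = f y" for x y
  proof -
    have "continuous_on {x..y} f"
      using deriv by (meson DERIV_continuous continuous_at_imp_continuous_on)
    moreover have "f differentiable (at z)" for z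
      using deriv real_differentiable_def by blast
    ultimately obtain z where "x < z" "z < y" "(f has_real_derivative 0) (at z)"
      using Rolle[OF xy] by blast
    then show ?thesis using DERIV_unique[OF deriv] by blast
  qed
  obtain z1 z2 where "z1 < b" "b < z2" "f' z1 = 0" "f' z2 = 0"
    using critical_point[of a b] critical_point[of b c] assms by auto
  then show False using strict_monoD[OF \<open>strict_mono f'\<close>, of z1 z2] by simp
qed

text \<open>The function \<open>s \<mapsto> 2 powr -s + (3/2) powr s\<close> is strictly convex and equals 2 at
  \<open>s = 0\<close> and \<open>s = 1\<close>, so it takes the value 2 nowhere else.\<close>
lemma one_plus_three_powr_eq_two_mult_two_powr_imp:
  fixes t :: real
  assumes "t > 0" and "1 + 3 powr t = 2 * 2 powr t"
  shows "t = 1"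
proof (rule ccontr)
  assume "t \<noteq> 1"
  define c1 where "c1 = ln (2::real)"
  define c2 where "c2 = ln (3::real) - ln 2"
  have "c1 > 0" "c2 > 0" unfolding c1_def c2_def by (simp_all add: ln_less_cancel_iff)
  define u where "u s = exp (- s * c1) + exp (s * c2)" for s
  define u' where "u' s = - c1 * exp (- s * c1) + c2 * exp (s * c2)" for s
  have deriv: "(u has_real_derivative u' s) (at s)" for s
    unfolding u_def u'_def by (auto intro!: derivative_eq_intros)
  have "strict_mono u'"
  proof (rule strict_monoI)
    fix a b :: real assume "a < b"
    then have "exp (- b * c1) < exp (- a * c1)" "exp (a * c2) < exp (b * c2)"
      using \<open>c1 > 0\<close> \<open>c2 > 0\<close> by (simp_all add: mult_strict_right_mono)
    then have "c1 * exp (- b * c1) < c1 * exp (- a * c1)" "c2 * exp (a * c2) < c2 * exp (b * c2)"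
      using \<open>c1 > 0\<close> \<open>c2 > 0\<close> by simp_all
    then show "u' a < u' b" unfolding u'_def by linarith
  qed
  have "u 0 = 2" "u 1 = 2" unfolding u_def c1_def c2_def by (simp_all add: exp_minus exp_diff)
  moreover have "u t = 2"
  proof -
    have "u t = (1 + 3 powr t) / 2 powr t"
      unfolding u_def c1_def c2_def powr_def
      by (simp add: exp_minus exp_diff algebra_simps add_divide_distrib inverse_eq_divide)
    then show ?thesis using assms(2) by simp
  qed
  ultimately show False
    using no_three_equal_values_if_strict_mono_deriv[OF deriv \<open>strict_mono u'\<close>, of 0 t 1]
      no_three_equal_values_if_strict_mono_deriv[OF deriv \<open>strict_mono u'\<close>, of 0 1 t]
      \<open>t > 0\<close> \<open>t \<noteq> 1\<close> by fastforce
qed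

lemma Phi_symmetric: "Phi p m (m - s) = Phi p m s"
  by (simp add: Phi_def add.commute mult.commute)

lemma Phi_homogeneous:
  assumes "p \<noteq> 1" "c > 0" "0 \<le> s" "s \<le> m"
  shows "Phi p (c * m) (c * s) = c * Phi p m s"
proof -
  define S where "S = (m - s) powr (1 / (p - 1)) + s powr (1 / (p - 1))"
  have "S \<ge> 0" unfolding S_def by simp
  have "(c * m - c * s) powr (1 / (p - 1)) + (c * s) powr (1 / (p - 1))
      = c powr (1 / (p - 1)) * S"
    unfolding S_def right_diff_distrib[symmetric] using assms by (simp add: powr_mult distrib_left)
  moreover have "(c powr (1 / (p - 1)) * S) powr (p - 1) = c * S powr (p - 1)"
    using assms \<open>S \<ge> 0\<close> by (simp add: powr_mult powr_powr)
  ultimately show ?thesis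
    unfolding Phi_def S_def[symmetric] using assms
    by (simp add: power2_eq_square right_diff_distrib[symmetric])
qed

lemma Phi_four_one: "Phi p 4 1 = 3 / (1 + 3 powr (1 / (p - 1))) powr (p - 1)"
  by (simp add: Phi_def add.commute)

lemma Phi_four_two:
  assumes "p \<noteq> 1" shows "Phi p 4 2 = 2 / 2 powr (p - 1)"
proof -
  have "(2 * 2 powr (1 / (p - 1))) powr (p - 1) = 2 powr (p - 1) * 2"
    using assms by (simp add: powr_mult powr_powr)
  then show ?thesis by (simp add: Phi_def)
qed

lemma p_eq_2_if_Phi_quarter_relation:
  assumes "p > 1" "h > 0" and "3 * Phi p (4 * h) (2 * h) = 4 * Phi p (4 * h) h"
  shows "p = 2"
proof -
  have "p \<noteq> 1" using assms(1) by simp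
  have "3 * Phi p 4 2 = 4 * Phi p 4 1"
    using assms(2,3) Phi_homogeneous[OF \<open>p \<noteq> 1\<close> \<open>h > 0\<close>, of 2 4]
      Phi_homogeneous[OF \<open>p \<noteq> 1\<close> \<open>h > 0\<close>, of 1 4] by (simp add: mult.commute)
  define t where "t = 1 / (p - 1)"
  have "t > 0" "t * (p - 1) = 1" using assms(1) unfolding t_def by auto
  have "1 + 3 powr t > 0" by (simp add: add_pos_nonneg)
  with \<open>3 * Phi p 4 2 = 4 * Phi p 4 1\<close> have "(1 + 3 powr t) powr (p - 1) = 2 * 2 powr (p - 1)"
    unfolding Phi_four_one Phi_four_two[OF \<open>p \<noteq> 1\<close>] t_def[symmetric] by (simp add: field_simps)
  then have "((1 + 3 powr t) powr (p - 1)) powr t = (2 * 2 powr (p - 1)) powr t" by simp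
  then have "1 + 3 powr t = 2 * 2 powr t"
    using \<open>t * (p - 1) = 1\<close> \<open>1 + 3 powr t > 0\<close> by (simp add: powr_powr powr_mult mult.commute)
  then have "t = 1" using one_plus_three_powr_eq_two_mult_two_powr_imp \<open>t > 0\<close> by blast
  then show ?thesis unfolding t_def using assms(1) by (simp add: field_simps)
qed

definition sublevel_measure :: "'a::euclidean_space set \<Rightarrow> 'a \<Rightarrow> real \<Rightarrow> real" where
  "sublevel_measure \<Omega> e t = measure lborel (\<Omega> \<inter> {x. x \<bullet> e \<le> t})"

lemma hyperplane_null_sets:
  fixes e :: "'a::euclidean_space"
  assumes "e \<noteq> 0" shows "{x. x \<bullet> e = t} \<in> null_sets lborel"
proof -
  have "negligible {x. e \<bullet> x = t}" using assms by (rule negligible_hyperplane[OF disjI1])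
  moreover have "closed {x. x \<bullet> e = t}" by (intro closed_Collect_eq continuous_intros)
  ultimately show ?thesis
    by (auto simp: inner_commute null_sets_completion_iff negligible_iff_null_sets)
qed

lemma sublevel_measure_atomless_cdf:
  fixes \<Omega> :: "'a::euclidean_space set"
  assumes "\<Omega> \<in> sets lborel" "emeasure lborel \<Omega> < \<infinity>" "e \<noteq> 0"
  obtains M where "finite_borel_measure M" "sublevel_measure \<Omega> e = cdf M"
    "\<And>t. measure M {t} = 0"
proof
  define N where "N = restrict_space lborel \<Omega>"
  define M where "M = distr N borel (\<lambda>x. x \<bullet> e)"
  have "(\<lambda>x. x \<bullet> e) \<in> N \<rightarrow>\<^sub>M borel"
    unfolding N_def by (intro measurable_restrict_space1) simp
  then have emeasure_M: "emeasure M S = emeasure lborel (\<Omega> \<inter> {x. x \<bullet> e \<in> S})"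
    if "S \<in> sets borel" for S
    unfolding M_def N_def using assms(1) that
    by (simp add: emeasure_distr emeasure_restrict_space space_restrict_space vimage_def Int_commute
        sets_restrict_space_iff)
  have measure_M: "measure M S = measure lborel (\<Omega> \<inter> {x. x \<bullet> e \<in> S})" if "S \<in> sets borel" for S
    using emeasure_M[OF that] by (simp add: measure_def)
  show "finite_borel_measure M"
  proof (unfold finite_borel_measure_def finite_borel_measure_axioms_def, intro conjI finite_measureI)
    show "sets M = sets borel" unfolding M_def by simp
    show "emeasure M (space M) \<noteq> \<infinity>"
      using emeasure_M[of UNIV] assms(2) by (simp add: M_def)
  qed
  show "sublevel_measure \<Omega> e = cdf M"
    by (auto simp: sublevel_measure_def cdf_def2 measure_M)
  show "measure M {t} = 0" for t
  proof -
    have "\<Omega> \<inter> {x. x \<bullet> e = t} \<in> null_sets lborel"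
      using null_set_Int1[OF hyperplane_null_sets[OF assms(3)] assms(1)] .
    then show ?thesis using measure_M[of "{t}"] by (simp add: measure_def null_setsD1)
  qed
qed

context
  fixes \<Omega> :: "'a::euclidean_space set" and e :: 'a
  assumes \<Omega>_sets: "\<Omega> \<in> sets lborel" and \<Omega>_finite: "emeasure lborel \<Omega> < \<infinity>" and "e \<noteq> 0"
begin

lemma isCont_sublevel_measure: "isCont (sublevel_measure \<Omega> e) t"
  using finite_borel_measure.isCont_cdf
  by (metis \<Omega>_finite \<Omega>_sets \<open>e \<noteq> 0\<close> sublevel_measure_atomless_cdf)

lemma sublevel_measure_mono: "s \<le> t \<Longrightarrow> sublevel_measure \<Omega> e s \<le> sublevel_measure \<Omega> e t"
  by (metis \<Omega>_finite \<Omega>_sets \<open>e \<noteq> 0\<close> sublevel_measure_atomless_cdf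
      finite_borel_measure.cdf_nondecreasing)

lemma measure_slab:
  assumes "s \<le> t"
  shows "measure lborel (\<Omega> \<inter> {x. s < x \<bullet> e \<and> x \<bullet> e < t})
       = sublevel_measure \<Omega> e t - sublevel_measure \<Omega> e s"
proof -
  let ?L = "\<Omega> \<inter> {x. x \<bullet> e \<le> s}" and ?S = "\<Omega> \<inter> {x. s < x \<bullet> e \<and> x \<bullet> e < t}"
  have sets: "?L \<in> sets lborel" "?S \<in> sets lborel" using \<Omega>_sets by auto
  have finite_subset: "emeasure lborel S \<noteq> \<infinity>" if "S \<subseteq> \<Omega>" for S
    using le_less_trans[OF emeasure_mono[OF that \<Omega>_sets] \<Omega>_finite] by simp
  have "\<Omega> \<inter> {x. x \<bullet> e \<le> t} = (?L \<union> ?S) \<union> (\<Omega> \<inter> {x. x \<bullet> e = t})"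
    using assms by auto
  then have "sublevel_measure \<Omega> e t = measure lborel (?L \<union> ?S)"
    unfolding sublevel_measure_def
    using sets null_set_Int1[OF hyperplane_null_sets[OF \<open>e \<noteq> 0\<close>] \<Omega>_sets]
    by (simp add: measure_Un_null_set)
  also have "\<dots> = measure lborel ?L + measure lborel ?S"
    using sets finite_subset by (intro measure_Union) auto
  finally show ?thesis by (simp add: sublevel_measure_def)
qed

end

lemma sublevel_measure_surj:
  fixes \<Omega> :: "'a::euclidean_space set"
  assumes "\<Omega> \<in> sets lborel" "bounded \<Omega>" "e \<noteq> 0" "0 \<le> v" "v \<le> measure lborel \<Omega>"
  obtains t where "sublevel_measure \<Omega> e t = v"
proof -
  obtain B where B: "\<And>x. x \<in> \<Omega> \<Longrightarrow> norm x \<le> B"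
    using assms(2) unfolding bounded_iff by blast
  define R where "R = \<bar>B\<bar> * norm e + 1"
  have R: "\<bar>x \<bullet> e\<bar> < R" if "x \<in> \<Omega>" for x
  proof -
    have "\<bar>x \<bullet> e\<bar> \<le> norm x * norm e" by (rule Cauchy_Schwarz_ineq2)
    also have "\<dots> \<le> \<bar>B\<bar> * norm e" using B[OF that] by (intro mult_right_mono) auto
    finally show ?thesis unfolding R_def by simp
  qed
  have "\<Omega> \<inter> {x. x \<bullet> e \<le> - R} = {}" "\<Omega> \<inter> {x. x \<bullet> e \<le> R} = \<Omega>"
    using R by (fastforce simp: abs_less_iff)+
  then have "sublevel_measure \<Omega> e (- R) \<le> v" "v \<le> sublevel_measure \<Omega> e R"
    using assms(4,5) by (simp_all add: sublevel_measure_def)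
  moreover have "- R \<le> R" unfolding R_def by (simp add: add_nonneg_pos)
  moreover have "continuous_on {- R..R} (sublevel_measure \<Omega> e)"
    using isCont_sublevel_measure[OF assms(1) emeasure_bounded_finite[OF assms(2)] assms(3)]
    by (intro continuous_at_imp_continuous_on) auto
  ultimately show thesis using IVT' that by blast
qed

lemma measure_lborel_open_pos:
  fixes S :: "'a::euclidean_space set"
  assumes "open S" "S \<noteq> {}" "bounded S" shows "measure lborel S > 0"
proof -
  have "S \<notin> null_sets lborel"
    using open_not_negligible[OF assms(1,2)] assms(1)
    by (simp add: negligible_iff_null_sets null_sets_completion_iff borel_open)
  then show ?thesis
    using emeasure_bounded_finite[OF assms(3)] assms(1)
    by (simp add: measure_def null_sets_def enn2real_positive_iff zero_less_iff_neq_zero borel_open)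
qed

lemma exists_disjoint_open_subsets_of_measures:
  fixes \<Omega> :: "'a::euclidean_space set"
  assumes "open \<Omega>" "bounded \<Omega>" "a > 0" "b > 0" "d > 0" "a + b + d \<le> measure lborel \<Omega>"
  obtains A B D where "open A" "open B" "open D" "A \<subseteq> \<Omega>" "B \<subseteq> \<Omega>" "D \<subseteq> \<Omega>"
    "A \<inter> B = {}" "A \<inter> D = {}" "B \<inter> D = {}"
    "measure lborel A = a" "measure lborel B = b" "measure lborel D = d"
proof -
  define e :: 'a where "e = (SOME i. i \<in> Basis)"
  have "e \<noteq> 0" unfolding e_def using SOME_Basis nonzero_Basis by blast
  have \<Omega>_sets: "\<Omega> \<in> sets lborel" using assms(1) by simp
  note \<Omega>_finite = emeasure_bounded_finite[OF assms(2)]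
  let ?F = "sublevel_measure \<Omega> e"
  have "\<exists>t. ?F t = v" if "0 \<le> v" "v \<le> a + b + d" for v
    using sublevel_measure_surj[OF \<Omega>_sets assms(2) \<open>e \<noteq> 0\<close>, of v] that assms(6) by auto
  then obtain t0 t1 t2 t3 where F: "?F t0 = 0" "?F t1 = a" "?F t2 = a + b" "?F t3 = a + b + d"
    using assms(3-5) by (metis add_increasing2 add_nonneg_nonneg less_imp_le order_refl)
  have less: "s < t" if "?F s < ?F t" for s t
    using sublevel_measure_mono[OF \<Omega>_sets \<Omega>_finite \<open>e \<noteq> 0\<close>, of t s] that by force
  have "t0 < t1" "t1 < t2" "t2 < t3" using less F assms(3-5) by simp_all
  define slab where "slab s t = \<Omega> \<inter> {x. s < x \<bullet> e \<and> x \<bullet> e < t}" for s t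
  have "open (slab s t)" for s t
    unfolding slab_def by (intro open_Int assms(1) open_Collect_conj open_Collect_less continuous_intros)
  moreover have "measure lborel (slab s t) = ?F t - ?F s" if "s \<le> t" for s t
    unfolding slab_def using measure_slab[OF \<Omega>_sets \<Omega>_finite \<open>e \<noteq> 0\<close> that] .
  moreover have "slab s t \<subseteq> \<Omega>" for s t unfolding slab_def by auto
  moreover have "slab r s \<inter> slab s' t = {}" if "s \<le> s'" for r s s' t
    unfolding slab_def using that by auto
  ultimately show thesis
    using that[of "slab t0 t1" "slab t1 t2" "slab t2 t3"] F \<open>t0 < t1\<close> \<open>t1 < t2\<close> \<open>t2 < t3\<close>
    by simp
qed

lemma symmetrised_product_measure_additive:
  fixes \<mu> :: "('a::topological_space \<times> 'a) measure" and g :: "'a set \<Rightarrow> 'a set \<Rightarrow> real"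
  assumes "open \<Omega>" "finite_measure \<mu>" "sets \<mu> = sets (restrict_space borel (\<Omega> \<times> \<Omega>))"
    and g: "\<And>A B. open A \<Longrightarrow> open B \<Longrightarrow> A \<subseteq> \<Omega> \<Longrightarrow> B \<subseteq> \<Omega> \<Longrightarrow> A \<inter> B = {} \<Longrightarrow>
              g A B = C * (measure \<mu> (A \<times> B) + measure \<mu> (B \<times> A))"
    and "open A" "open B" "open D" "A \<subseteq> \<Omega>" "B \<subseteq> \<Omega>" "D \<subseteq> \<Omega>"
    and "A \<inter> B = {}" "A \<inter> D = {}" "B \<inter> D = {}"
  shows "g (A \<union> B) D = g A D + g B D"
proof -
  have sets: "X \<times> Y \<in> sets \<mu>" if "open X" "open Y" "X \<subseteq> \<Omega>" "Y \<subseteq> \<Omega>" for X Y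
    unfolding assms(3) using that assms(1)
    by (subst sets_restrict_space_iff) (auto simp: borel_open open_Times)
  have "measure \<mu> ((A \<union> B) \<times> D) = measure \<mu> (A \<times> D) + measure \<mu> (B \<times> D)"
    "measure \<mu> (D \<times> (A \<union> B)) = measure \<mu> (D \<times> A) + measure \<mu> (D \<times> B)"
    using assms(5-) by (auto simp: Sigma_Un_distrib1 Sigma_Un_distrib2
        intro!: finite_measure.finite_measure_Union[OF assms(2)] sets)
  then show ?thesis
    using g[of "A \<union> B" D] g[of A D] g[of B D] assms(5-)
    by (simp add: open_Un Int_Un_distrib2 algebra_simps)
qed

theorem proposition3p9:
  fixes \<Omega> :: "'a::euclidean_space set"
    and p :: real and C :: real
    and \<mu> :: "('a \<times> 'a) measure"
  assumes "open \<Omega>" and "connected \<Omega>" and "bounded \<Omega>" and "\<Omega> \<noteq> {}"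
    and "p > 1"
    and "sets \<mu> = sets (restrict_space borel (\<Omega> \<times> \<Omega>))"
    and "finite_measure \<mu>"
    and "\<And>A B. open A \<Longrightarrow> open B \<Longrightarrow> A \<subseteq> \<Omega> \<Longrightarrow> B \<subseteq> \<Omega> \<Longrightarrow> A \<inter> B = {} \<Longrightarrow>
           Phi p (measure lborel \<Omega>) (measure lborel A)
         + Phi p (measure lborel \<Omega>) (measure lborel B)
         - Phi p (measure lborel \<Omega>) (measure lborel A + measure lborel B)
         = C * (measure \<mu> (A \<times> B) + measure \<mu> (B \<times> A))"
  shows "p = 2"
proof -
  define m where "m = measure lborel \<Omega>"
  define h where "h = m / 4"
  have "h > 0" unfolding h_def m_def using measure_lborel_open_pos assms(1,3,4) by simp
  then obtain A B D where opens: "open A" "open B" "open D" "A \<subseteq> \<Omega>" "B \<subseteq> \<Omega>" "D \<subseteq> \<Omega>"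
    and disjoint: "A \<inter> B = {}" "A \<inter> D = {}" "B \<inter> D = {}"
    and measures: "measure lborel A = h" "measure lborel B = h" "measure lborel D = h"
    using exists_disjoint_open_subsets_of_measures[OF assms(1,3), of h h h] unfolding h_def m_def
    by auto
  have "measure lborel (A \<union> B) = 2 * h"
    using opens disjoint measures emeasure_bounded_finite[OF bounded_subset[OF assms(3) opens(4)]]
      emeasure_bounded_finite[OF bounded_subset[OF assms(3) opens(5)]]
    by (subst measure_Union) (auto simp: borel_open)
  define g where "g X Y = Phi p m (measure lborel X) + Phi p m (measure lborel Y)
    - Phi p m (measure lborel X + measure lborel Y)" for X Y :: "'a set"
  have "g (A \<union> B) D = g A D + g B D"
    using symmetrised_product_measure_additive[of \<Omega> \<mu> g C A B D] assms(1,6-8) opens disjoint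
    unfolding g_def m_def by blast
  moreover have "Phi p m (3 * h) = Phi p m h" using Phi_symmetric[of p m h] by (simp add: h_def)
  ultimately have "3 * Phi p (4 * h) (2 * h) = 4 * Phi p (4 * h) h"
    unfolding g_def using measures \<open>measure lborel (A \<union> B) = 2 * h\<close> by (simp add: h_def)
  then show ?thesis using p_eq_2_if_Phi_quarter_relation \<open>p > 1\<close> \<open>h > 0\<close> by blast
qed

end
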